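(* Let $\lambda,\epsilon>0$ be constants with $\lambda+\epsilon<1$. Consider CVRP instances in an arbitrary metric space $(X,\delta)$, with a depot $O\in X$, a set $V\subseteq X$ of $n$ customers and capacity $k=k(n)$, where $k(n)\to\infty$ as $n\to\infty$. Then for all sufficiently large $n$ there exists a set $U\subseteq V$ with $|U|>(\lambda+\frac{\epsilon}{2})n$ such that $$\mathrm{OPT}\ \ge\ \mathrm{rad}+(1-\lambda-\epsilon)\sum_{x\in U}\delta\big(x,U\setminus\{x\}\big).$$
   Context: $\mathrm{OPT}$ is the minimum total cost of a collection of tours, each starting and ending at $O$ and visiting at most $k$ points of $V$, that together visit every point of $V$; the cost of a tour is the sum of $\delta$-distances between consecutive points. $\ell(x)=\delta(O,x)$ and $\mathrm{rad}=\frac{2}{k}\sum_{x\in V}\ell(x)$. For a point $x$ and a set $A$, $\delta(x,A)=\min_{a\in A}\delta(x,a)$ (with $\delta(x,\emptyset)=0$). *)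

theory Defs
  imports "HOL-Analysis.Analysis"
begin

fun path_cost :: "'a::metric_space list \<Rightarrow> real" where
  "path_cost [] = 0"
| "path_cost [x] = 0"
| "path_cost (x # y # zs) = dist x y + path_cost (y # zs)"

definition tour_cost :: "'a::metric_space \<Rightarrow> 'a list \<Rightarrow> real" where
  "tour_cost dep t = path_cost (dep # t @ [dep])"

definition feasible_solution :: "'a::metric_space set \<Rightarrow> nat \<Rightarrow> 'a list list \<Rightarrow> bool" where
  "feasible_solution V k T \<longleftrightarrow>
     (\<forall>t\<in>set T. set t \<subseteq> V \<and> length t \<le> k) \<and> V \<subseteq> (\<Union>t\<in>set T. set t)"

definition OPT :: "'a::metric_space \<Rightarrow> 'a set \<Rightarrow> nat \<Rightarrow> real" where
  "OPT dep V k = Inf {(\<Sum>t\<leftarrow>T. tour_cost dep t) | T. feasible_solution V k T}"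

definition rad :: "'a::metric_space \<Rightarrow> 'a set \<Rightarrow> nat \<Rightarrow> real" where
  "rad dep V k = 2 / real k * (\<Sum>x\<in>V. dist dep x)"

end

theory Submission
  imports Defs
begin

text \<open>A tour of length C visiting x after travelling y x satisfies dist O x \<le> y x \<le> C - dist O x
  and dist a b \<le> |y a - y b|. Hence 2 dist O x \<le> C - |2 y x - C|, and, listing the customers of
  one walk by arrival time, their nearest-neighbour distances add up to at most its length.

  Split an arbitrary solution into tours. A tour with at most (lam + eps) k customers spends at most
  (lam + eps) C on its share of rad; all these tours concatenate into one walk, whose length pays
  for the nearest-neighbour sum of all their customers with the remaining (1 - lam - eps) C.
  In a tour with more customers keep the (lam + 3 eps / 4)-fraction visited closest to the middle
  of the tour: their arrival times lie in an interval of length R, while every discarded customer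
  has 2 dist O x \<le> C - R; since k is large, the saving on the discarded customers pays for the
  nearest-neighbour sum of the kept ones. The union of all kept customers has more than
  (lam + eps / 2) n elements, and a set minimising the nearest-neighbour sum among all such sets
  then serves every solution at once, in particular an optimal one.\<close>

section \<open>Arrival times along a closed walk\<close>

text \<open>Only these inequalities of the actual arrival times y x (distance travelled from the depot
  before reaching x on a closed walk of length C) are used; they survive concatenating walks and
  passing to subsets.\<close>

definition arrival_times :: "'a::metric_space \<Rightarrow> real \<Rightarrow> 'a set \<Rightarrow> ('a \<Rightarrow> real) \<Rightarrow> bool" where
  "arrival_times dep C S y \<longleftrightarrow>
     (\<forall>x\<in>S. dist dep x \<le> y x \<and> y x \<le> C - dist dep x) \<and>
     (\<forall>a\<in>S. \<forall>b\<in>S. dist a b \<le> \<bar>y a - y b\<bar>)"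

lemma arrival_times_subset: "arrival_times dep C S y \<Longrightarrow> S' \<subseteq> S \<Longrightarrow> arrival_times dep C S' y"
  unfolding arrival_times_def by blast

lemma arrival_times_dist_le:
  "arrival_times dep C S y \<Longrightarrow> a \<in> S \<Longrightarrow> b \<in> S \<Longrightarrow> dist a b \<le> \<bar>y a - y b\<bar>"
  unfolding arrival_times_def by blast

lemma arrival_times_bounds:
  "arrival_times dep C S y \<Longrightarrow> x \<in> S \<Longrightarrow> dist dep x \<le> y x \<and> y x \<le> C - dist dep x"
  unfolding arrival_times_def by blast

lemma arrival_times_twice_dist:
  assumes "arrival_times dep C S y" "x \<in> S"
  shows "2 * dist dep x + \<bar>2 * y x - C\<bar> \<le> C"
  using arrival_times_bounds[OF assms] by (simp add: abs_if)

lemma arrival_times_Un: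
  assumes w1: "arrival_times dep C1 S1 y1" and w2: "arrival_times dep C2 S2 y2"
    and disj: "S1 \<inter> S2 = {}" and "C1 \<ge> 0" "C2 \<ge> 0"
  shows "arrival_times dep (C1 + C2) (S1 \<union> S2) (\<lambda>x. if x \<in> S1 then y1 x else C1 + y2 x)"
    (is "arrival_times _ _ _ ?y")
proof -
  have cross: "dist u v \<le> \<bar>?y u - ?y v\<bar>" if u: "u \<in> S1" and v: "v \<in> S2" for u v
  proof -
    have "dist u v \<le> dist dep u + dist dep v"
      by (metis dist_commute dist_triangle)
    moreover have "?y u = y1 u" "?y v = C1 + y2 v"
      using u v disj by auto
    ultimately show ?thesis
      using arrival_times_bounds[OF w1 u] arrival_times_bounds[OF w2 v] by linarith
  qed
  have bounds: "dist dep x \<le> ?y x \<and> ?y x \<le> C1 + C2 - dist dep x" if "x \<in> S1 \<union> S2" for x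
  proof (cases "x \<in> S1")
    case True
    then show ?thesis using arrival_times_bounds[OF w1 True] \<open>C2 \<ge> 0\<close> by simp
  next
    case False
    then have "x \<in> S2" using that by blast
    then show ?thesis using arrival_times_bounds[OF w2] \<open>C1 \<ge> 0\<close> False by fastforce
  qed
  have expand: "dist a b \<le> \<bar>?y a - ?y b\<bar>" if ab: "a \<in> S1 \<union> S2" "b \<in> S1 \<union> S2" for a b
  proof -
    consider "a \<in> S1" "b \<in> S1" | "a \<in> S1" "b \<in> S2" | "a \<in> S2" "b \<in> S1" | "a \<in> S2" "b \<in> S2"
      using ab by blast
    then show ?thesis
    proof cases
      case 1
      then show ?thesis using arrival_times_dist_le[OF w1] by simp
    next
      case 2
      then show ?thesis using cross by blast
    next
      case 3
      then show ?thesis using cross[of b a] by (simp add: dist_commute abs_minus_commute)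
    next
      case 4
      then have "a \<notin> S1" "b \<notin> S1" using disj by auto
      then show ?thesis using arrival_times_dist_le[OF w2 4] by simp
    qed
  qed
  show ?thesis
    unfolding arrival_times_def using bounds expand by blast
qed

lemma arrival_times_UN:
  assumes "finite I" "disjoint_family_on S I"
    and "\<And>i. i \<in> I \<Longrightarrow> \<exists>y. arrival_times dep (C i) (S i) y" "\<And>i. i \<in> I \<Longrightarrow> C i \<ge> 0"
  shows "\<exists>y. arrival_times dep (\<Sum>i\<in>I. C i) (\<Union>i\<in>I. S i) y"
  using assms
proof (induction I rule: finite_induct)
  case empty
  then show ?case by (simp add: arrival_times_def)
next
  case (insert j I)
  obtain y1 where "arrival_times dep (C j) (S j) y1"
    using insert.prems by blast
  moreover obtain y2 where "arrival_times dep (\<Sum>i\<in>I. C i) (\<Union>i\<in>I. S i) y2"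
    using insert.IH insert.prems disjoint_family_on_mono[of I "insert j I"] by blast
  moreover have "S j \<inter> (\<Union>i\<in>I. S i) = {}"
    using insert.prems(1) insert.hyps(2) unfolding disjoint_family_on_def by fastforce
  moreover have "C j \<ge> 0" "(\<Sum>i\<in>I. C i) \<ge> 0"
    using insert.prems(3) by (auto intro: sum_nonneg)
  ultimately have "\<exists>y. arrival_times dep (C j + (\<Sum>i\<in>I. C i)) (S j \<union> (\<Union>i\<in>I. S i)) y"
    using arrival_times_Un by blast
  then show ?case
    using insert.hyps by simp
qed

lemma arrival_times_sum_dist:
  assumes "arrival_times dep C S y"
  shows "2 * (\<Sum>x\<in>S. dist dep x) + (\<Sum>x\<in>S. \<bar>2 * y x - C\<bar>) \<le> real (card S) * C"
proof (cases "finite S")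
  case True
  have "2 * (\<Sum>x\<in>S. dist dep x) + (\<Sum>x\<in>S. \<bar>2 * y x - C\<bar>) = (\<Sum>x\<in>S. 2 * dist dep x + \<bar>2 * y x - C\<bar>)"
    by (simp add: sum_distrib_left sum.distrib)
  also have "\<dots> \<le> (\<Sum>x\<in>S. C)"
    by (rule sum_mono) (rule arrival_times_twice_dist[OF assms])
  finally show ?thesis by simp
qed simp

section \<open>Nearest-neighbour sums\<close>

text \<open>Since infdist x {} = 0, a point without companion in U contributes nothing; bounds on
  unions therefore require every point of the pieces to have a companion.\<close>

definition nn_sum :: "'a::metric_space set \<Rightarrow> real" where
  "nn_sum U = (\<Sum>x\<in>U. infdist x (U - {x}))"

lemma Diff_singleton_nonempty_if_two_le_card:
  assumes "2 \<le> card A"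
  shows "A - {x} \<noteq> {}"
proof
  assume "A - {x} = {}"
  then have "card A \<le> card {x}" by (intro card_mono) auto
  with assms show False by simp
qed

lemma infdist_remove_le:
  assumes "A \<subseteq> U" "A - {x} \<noteq> {}"
  shows "infdist x (U - {x}) \<le> infdist x (A - {x})"
  using assms by (intro infdist_mono) auto

lemma nn_sum_UN_le:
  assumes "finite I" "disjoint_family_on P I" "\<And>i. i \<in> I \<Longrightarrow> finite (P i)"
    and "\<And>i x. i \<in> I \<Longrightarrow> x \<in> P i \<Longrightarrow> P i - {x} \<noteq> {}"
  shows "nn_sum (\<Union>i\<in>I. P i) \<le> (\<Sum>i\<in>I. nn_sum (P i))"
proof -
  let ?U = "\<Union>i\<in>I. P i"
  have "nn_sum ?U = (\<Sum>i\<in>I. \<Sum>x\<in>P i. infdist x (?U - {x}))"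
    unfolding nn_sum_def using assms by (intro sum.UNION_disjoint_family) auto
  also have "\<dots> \<le> (\<Sum>i\<in>I. nn_sum (P i))"
    unfolding nn_sum_def using assms(4) by (intro sum_mono infdist_remove_le) auto
  finally show ?thesis .
qed

lemma nn_sum_Un_le:
  assumes "finite A" "finite B" "A \<inter> B = {}"
    and "\<And>x. x \<in> A \<Longrightarrow> A - {x} \<noteq> {}" "\<And>x. x \<in> B \<Longrightarrow> B - {x} \<noteq> {}"
  shows "nn_sum (A \<union> B) \<le> nn_sum A + nn_sum B"
proof -
  have "nn_sum (A \<union> B) = (\<Sum>x\<in>A. infdist x (A \<union> B - {x})) + (\<Sum>x\<in>B. infdist x (A \<union> B - {x}))"
    unfolding nn_sum_def using assms(1-3) by (rule sum.union_disjoint)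
  also have "\<dots> \<le> nn_sum A + nn_sum B"
    unfolding nn_sum_def using assms(4,5)
    by (intro add_mono sum_mono infdist_remove_le) auto
  finally show ?thesis .
qed

lemma sum_endpoints_le_gaps_plus:
  fixes a g :: "nat \<Rightarrow> real"
  assumes "\<And>i. i < q \<Longrightarrow> a i \<le> g i" "\<And>i. i < q \<Longrightarrow> a (Suc i) \<le> g i" "j < q"
  shows "(\<Sum>i<Suc q. a i) \<le> (\<Sum>i<q. g i) + g j"
  using assms
proof (induction q)
  case 0
  then show ?case by simp
next
  case (Suc q)
  have "a (Suc q) \<le> g q" using Suc.prems(2) by simp
  show ?case
  proof (cases "j < q")
    case True
    then have "(\<Sum>i<Suc q. a i) \<le> (\<Sum>i<q. g i) + g j" using Suc by simp
    with \<open>a (Suc q) \<le> g q\<close> show ?thesis by simp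
  next
    case False
    then have "j = q" using Suc.prems(3) by simp
    have "(\<Sum>i<Suc q. a i) \<le> (\<Sum>i<Suc q. g i)" using Suc.prems(1) by (intro sum_mono) simp
    with \<open>a (Suc q) \<le> g q\<close> \<open>j = q\<close> show ?thesis by simp
  qed
qed

lemma sum_endpoints_le_gaps_scaled:
  fixes a g :: "nat \<Rightarrow> real"
  assumes "\<And>i. i < q \<Longrightarrow> a i \<le> g i" "\<And>i. i < q \<Longrightarrow> a (Suc i) \<le> g i"
  shows "(\<Sum>i<Suc q. a i) * q \<le> (\<Sum>i<q. g i) * Suc q"
proof -
  have "(\<Sum>j<q. \<Sum>i<Suc q. a i) \<le> (\<Sum>j<q. (\<Sum>i<q. g i) + g j)"
    using assms by (intro sum_mono sum_endpoints_le_gaps_plus) auto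
  then show ?thesis by (simp add: sum.distrib algebra_simps)
qed

text \<open>List P by increasing y. The nearest-neighbour distance of each point is at most the gap to
  either neighbour in this list; charging every point to its right gap and the last one to the
  closing edge gives the first bound, and averaging over which gap is charged twice the second.\<close>

lemma nn_sum_le_span:
  fixes y :: "'a::metric_space \<Rightarrow> real"
  assumes fin: "finite P" and two: "2 \<le> card P"
    and expand: "\<And>a b. a \<in> P \<Longrightarrow> b \<in> P \<Longrightarrow> dist a b \<le> \<bar>y a - y b\<bar>"
  obtains lo hi where "lo \<in> P" "hi \<in> P"
    "nn_sum P \<le> (y hi - y lo) + dist hi lo"
    "nn_sum P * (card P - 1) \<le> (y hi - y lo) * card P"
proof -
  obtain ws where ws: "distinct ws" "set ws = P" "sorted (map y ws)"
    using finite_distinct_list[OF fin] by (metis distinct_sort set_sort sorted_sort_key)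
  define q where "q = card P - 1"
  have len: "length ws = Suc q" and q: "0 < q"
    using distinct_card[OF ws(1)] ws(2) two unfolding q_def by auto
  have inP: "ws!i \<in> P" if "i \<le> q" for i
    using that ws(2) len by (metis le_imp_less_Suc nth_mem)
  have mono: "y (ws!i) \<le> y (ws!j)" if "i \<le> j" "j \<le> q" for i j
    using sorted_nth_mono[OF ws(3), of i j] that len by simp
  have other: "ws!j \<in> P - {ws!i}" if "i \<le> q" "j \<le> q" "i \<noteq> j" for i j
    using inP[OF that(2)] nth_eq_iff_index_eq[OF ws(1), of i j] that len by simp
  define a where "a i = infdist (ws!i) (P - {ws!i})" for i
  define g where "g i = y (ws!Suc i) - y (ws!i)" for i
  have step: "dist (ws!i) (ws!Suc i) \<le> g i" if "i < q" for i
    using expand[OF inP inP, of i "Suc i"] mono[of i "Suc i"] that unfolding g_def by simp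
  have left: "a i \<le> g i" if "i < q" for i
    using infdist_le[OF other[of i "Suc i"], of "ws!i"] step[OF that] that unfolding a_def by simp
  have right: "a (Suc i) \<le> g i" if "i < q" for i
    using infdist_le[OF other[of "Suc i" i], of "ws!Suc i"] step[OF that] that unfolding a_def
    by (simp add: dist_commute)
  have closing: "a q \<le> dist (ws!q) (ws!0)"
    using infdist_le[OF other[of q 0], of "ws!q"] q unfolding a_def by simp
  have nn: "nn_sum P = (\<Sum>i<Suc q. a i)"
  proof -
    have "nn_sum P = sum_list (map (\<lambda>x. infdist x (P - {x})) ws)"
      unfolding nn_sum_def using ws by (simp add: sum_list_distinct_conv_sum_set)
    also have "\<dots> = (\<Sum>i<Suc q. a i)"
      unfolding a_def using len by (simp add: sum_list_sum_nth atLeast0LessThan)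
    finally show ?thesis .
  qed
  have span: "(\<Sum>i<q. g i) = y (ws!q) - y (ws!0)"
    unfolding g_def by (rule sum_lessThan_telescope)
  show ?thesis
  proof
    show "ws!0 \<in> P" "ws!q \<in> P" using inP by auto
    have "(\<Sum>i<q. a i) \<le> (\<Sum>i<q. g i)" using left by (intro sum_mono) simp
    then show "nn_sum P \<le> y (ws!q) - y (ws!0) + dist (ws!q) (ws!0)"
      using nn span closing by simp
    have "real (card P - 1) = q" "real (card P) = Suc q" using q unfolding q_def by auto
    then show "nn_sum P * (card P - 1) \<le> (y (ws!q) - y (ws!0)) * card P"
      using sum_endpoints_le_gaps_scaled[of q a g, OF left right] nn span by simp
  qed
qed

lemma arrival_times_nn_sum_le:
  assumes w: "arrival_times dep C P y" and "finite P" "2 \<le> card P"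
  shows "nn_sum P \<le> C"
proof -
  obtain lo hi where lo: "lo \<in> P" and hi: "hi \<in> P"
    and "nn_sum P \<le> (y hi - y lo) + dist hi lo"
    using nn_sum_le_span[OF assms(2,3) arrival_times_dist_le[OF w]] by metis
  moreover have "dist hi lo \<le> dist dep hi + dist dep lo"
    by (metis dist_commute dist_triangle)
  ultimately show ?thesis
    using arrival_times_bounds[OF w lo] arrival_times_bounds[OF w hi] by linarith
qed

section \<open>Tours and solutions\<close>

lemma path_cost_conv_sum: "path_cost xs = (\<Sum>j < length xs - 1. dist (xs!j) (xs!Suc j))"
proof (induction xs rule: path_cost.induct)
  case (3 x y zs)
  then show ?case
    by (simp add: sum.lessThan_Suc_shift del: sum.lessThan_Suc)
qed simp_all

lemma path_cost_nonneg: "path_cost xs \<ge> 0"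
  unfolding path_cost_conv_sum by (rule sum_nonneg) simp

lemma dist_le_sum_steps:
  fixes f :: "nat \<Rightarrow> 'a::metric_space"
  assumes "a \<le> b"
  shows "dist (f a) (f b) \<le> (\<Sum>j<b. dist (f j) (f (Suc j))) - (\<Sum>j<a. dist (f j) (f (Suc j)))"
  using assms
proof (induction b rule: dec_induct)
  case (step n)
  have "dist (f a) (f (Suc n)) \<le> dist (f a) (f n) + dist (f n) (f (Suc n))"
    by (rule dist_triangle)
  with step.IH show ?case by simp
qed simp

lemma arrival_times_tour: "\<exists>y. arrival_times dep (tour_cost dep t) (set t) y"
proof -
  define f where "f j = (dep # t @ [dep]) ! j" for j
  define travelled where "travelled i = (\<Sum>j<i. dist (f j) (f (Suc j)))" for i
  define n where "n = length t"
  have cost: "tour_cost dep t = travelled (Suc n)"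
    unfolding tour_cost_def path_cost_conv_sum travelled_def f_def n_def by simp
  have ends: "f 0 = dep" "f (Suc n) = dep"
    unfolding f_def n_def by (auto simp: nth_append)
  have "\<forall>x\<in>set t. \<exists>i. i < n \<and> t ! i = x"
    by (auto simp: n_def in_set_conv_nth)
  then obtain idx where "\<forall>x\<in>set t. idx x < n \<and> t ! idx x = x"
    by metis
  then have idx: "\<forall>x\<in>set t. idx x < n \<and> f (Suc (idx x)) = x"
    unfolding f_def n_def by (simp add: nth_append)
  have dist_le: "dist (f a) (f b) \<le> travelled b - travelled a" if "a \<le> b" for a b
    unfolding travelled_def by (rule dist_le_sum_steps[OF that])
  have "arrival_times dep (travelled (Suc n)) (set t) (\<lambda>x. travelled (Suc (idx x)))"
    unfolding arrival_times_def
  proof (intro conjI ballI)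
    fix x assume x: "x \<in> set t"
    show "dist dep x \<le> travelled (Suc (idx x))"
      using dist_le[of 0 "Suc (idx x)"] ends idx x by (simp add: travelled_def)
    show "travelled (Suc (idx x)) \<le> travelled (Suc n) - dist dep x"
      using dist_le[of "Suc (idx x)" "Suc n"] ends idx x by (force simp: dist_commute)
  next
    fix a b assume "a \<in> set t" "b \<in> set t"
    then show "dist a b \<le> \<bar>travelled (Suc (idx a)) - travelled (Suc (idx b))\<bar>"
      using dist_le[of "Suc (idx a)" "Suc (idx b)"] dist_le[of "Suc (idx b)" "Suc (idx a)"] idx
      by (cases "idx a \<le> idx b") (auto simp: dist_commute)
  qed
  then show ?thesis using cost by auto
qed

text \<open>Charging every customer to the first tour visiting it splits a solution into disjoint pieces.\<close>

lemma feasible_solution_pieces: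
  assumes feas: "feasible_solution V K T"
  obtains S :: "nat \<Rightarrow> 'a::metric_space set" and C :: "nat \<Rightarrow> real"
  where "disjoint_family_on S {..<length T}" "V = (\<Union>i<length T. S i)"
    "\<And>i. i < length T \<Longrightarrow> finite (S i) \<and> card (S i) \<le> K \<and> C i \<ge> 0 \<and> (\<exists>y. arrival_times dep (C i) (S i) y)"
    "(\<Sum>t\<leftarrow>T. tour_cost dep t) = (\<Sum>i<length T. C i)"
proof -
  define S where "S i = set (T!i) - (\<Union>j<i. set (T!j))" for i
  define C where "C i = tour_cost dep (T!i)" for i
  have tour: "set (T!i) \<subseteq> V \<and> length (T!i) \<le> K" if "i < length T" for i
    using feas nth_mem[OF that] unfolding feasible_solution_def by blast
  have "disjoint_family_on S {..<length T}"
    unfolding disjoint_family_on_def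
  proof (intro ballI impI)
    fix i j :: nat assume "i \<noteq> j"
    then consider "i < j" | "j < i" by linarith
    then show "S i \<inter> S j = {}" by cases (auto simp: S_def)
  qed
  moreover have "V = (\<Union>i<length T. S i)"
  proof
    show "(\<Union>i<length T. S i) \<subseteq> V" using tour unfolding S_def by blast
    show "V \<subseteq> (\<Union>i<length T. S i)"
    proof
      fix x assume "x \<in> V"
      then obtain t where "t \<in> set T" "x \<in> set t"
        using feas unfolding feasible_solution_def by blast
      then have ex: "\<exists>i. i < length T \<and> x \<in> set (T!i)"
        by (metis in_set_conv_nth)
      define i where "i = (LEAST i. i < length T \<and> x \<in> set (T!i))"
      have first: "i < length T \<and> x \<in> set (T!i)"
        unfolding i_def by (rule LeastI_ex[OF ex])
      have "x \<notin> set (T!j)" if "j < i" for j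
        using not_less_Least[OF that[unfolded i_def]] first that by auto
      with first show "x \<in> (\<Union>i<length T. S i)" unfolding S_def by blast
    qed
  qed
  moreover have "finite (S i) \<and> card (S i) \<le> K \<and> C i \<ge> 0 \<and> (\<exists>y. arrival_times dep (C i) (S i) y)"
    if i: "i < length T" for i
  proof -
    have "card (S i) \<le> card (set (T!i))" unfolding S_def by (intro card_mono) auto
    also have "\<dots> \<le> K" using card_length[of "T!i"] tour[OF i] by linarith
    finally have "card (S i) \<le> K" .
    moreover obtain y where "arrival_times dep (C i) (set (T!i)) y"
      using arrival_times_tour unfolding C_def by blast
    then have "arrival_times dep (C i) (S i) y"
      by (rule arrival_times_subset) (auto simp: S_def)
    moreover have "C i \<ge> 0" unfolding C_def tour_cost_def by (rule path_cost_nonneg)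
    ultimately show ?thesis unfolding S_def by auto
  qed
  moreover have "(\<Sum>t\<leftarrow>T. tour_cost dep t) = (\<Sum>i<length T. C i)"
    unfolding C_def by (simp add: sum_list_sum_nth atLeast0LessThan)
  ultimately show ?thesis using that by blast
qed

section \<open>Witness sets\<close>

lemma exists_subset_below_threshold:
  fixes f :: "'b \<Rightarrow> real"
  assumes fin: "finite S" and p: "0 < p" "p \<le> card S"
  obtains B R where "B \<subseteq> S" "card B = p" "R \<in> f ` S"
    "\<And>b. b \<in> B \<Longrightarrow> f b \<le> R" "\<And>c. c \<in> S - B \<Longrightarrow> R \<le> f c"
proof -
  obtain zs where zs: "distinct zs" "set zs = S" "sorted (map f zs)"
    using finite_distinct_list[OF fin] by (metis distinct_sort set_sort sorted_sort_key)
  have len: "length zs = card S" using distinct_card[OF zs(1)] zs(2) by simp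
  have mono: "f (zs!i) \<le> f (zs!j)" if "i \<le> j" "j < card S" for i j
    using sorted_nth_mono[OF zs(3), of i j] that len by simp
  define B where "B = set (take p zs)"
  define R where "R = f (zs ! (p - 1))"
  show ?thesis
  proof
    show "B \<subseteq> S" unfolding B_def using zs(2) by (meson set_take_subset)
    show "card B = p" unfolding B_def using distinct_card[of "take p zs"] zs(1) len p by simp
    have "p - 1 < length zs" using len p by simp
    then show "R \<in> f ` S" unfolding R_def using zs(2) nth_mem by blast
  next
    fix b assume "b \<in> B"
    then obtain i where "i < p" "b = zs ! i"
      unfolding B_def using len p by (auto simp: in_set_conv_nth)
    then show "f b \<le> R" unfolding R_def using mono[of i "p - 1"] p by simp
  next
    fix c assume c: "c \<in> S - B"
    then obtain j where j: "j < card S" "c = zs ! j"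
      using zs(2) len by (auto simp: in_set_conv_nth)
    have "\<not> j < p"
      using c j len unfolding B_def by (auto simp: in_set_conv_nth)
    then show "R \<le> f c" unfolding R_def using mono[of "p - 1" j] j by simp
  qed
qed

text \<open>Keep the p customers visited closest to the middle of the walk: a threshold R on
  the deviation |2 y x - C| both confines their arrival times to an interval of length R and
  forces every other customer x to satisfy 2 dist dep x \<le> C - R.\<close>

lemma arrival_times_central_subset:
  assumes w: "arrival_times dep C S y" and fin: "finite S"
    and p: "2 \<le> p" "p \<le> card S" and K: "card S \<le> K"
  obtains B R where "B \<subseteq> S" "card B = p" "0 \<le> R"
    "(1 - p / K) * R \<le> C - 2 / K * (\<Sum>x\<in>S. dist dep x)"
    "nn_sum B * (real p - 1) \<le> R * p"
proof -
  define \<kappa> where "\<kappa> x = \<bar>2 * y x - C\<bar>" for x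
  obtain B R where B: "B \<subseteq> S" "card B = p" and R: "R \<in> \<kappa> ` S"
    and inside: "\<And>b. b \<in> B \<Longrightarrow> \<kappa> b \<le> R" and outside: "\<And>c. c \<in> S - B \<Longrightarrow> R \<le> \<kappa> c"
    using exists_subset_below_threshold[OF fin, of p \<kappa>] p by auto
  have R_bounds: "0 \<le> R" "R \<le> C"
  proof -
    obtain x where "x \<in> S" "R = \<kappa> x" using R by blast
    then show "0 \<le> R" "R \<le> C"
      using arrival_times_twice_dist[OF w, of x] zero_le_dist[of dep x] abs_ge_zero[of "2 * y x - C"]
      unfolding \<kappa>_def by linarith+
  qed
  have "real (card S - p) * R = (\<Sum>x\<in>S - B. R)"
    using B fin by (simp add: card_Diff_subset finite_subset)
  also have "\<dots> \<le> (\<Sum>x\<in>S - B. \<kappa> x)"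
    using outside by (rule sum_mono)
  also have "\<dots> \<le> (\<Sum>x\<in>S. \<kappa> x)"
    using fin by (intro sum_mono2) (auto simp: \<kappa>_def)
  finally have "2 * (\<Sum>x\<in>S. dist dep x) \<le> card S * C - (card S - p) * R"
    using arrival_times_sum_dist[OF w] unfolding \<kappa>_def by linarith
  moreover have "(K - card S) * R \<le> (K - card S) * C"
    using K R_bounds by (intro mult_left_mono) auto
  ultimately have "(real K - p) * R \<le> K * C - 2 * (\<Sum>x\<in>S. dist dep x)"
    using p K by (simp add: algebra_simps of_nat_diff)
  then have "(real K - p) * R / K \<le> (K * C - 2 * (\<Sum>x\<in>S. dist dep x)) / K"
    by (rule divide_right_mono) simp
  moreover have "real K > 0" using p K by linarith
  then have "(1 - p / K) * R = (real K - p) * R / K"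
    and "C - 2 / K * (\<Sum>x\<in>S. dist dep x) = (K * C - 2 * (\<Sum>x\<in>S. dist dep x)) / K"
    by (simp_all add: field_simps)
  ultimately have radius: "(1 - p / K) * R \<le> C - 2 / K * (\<Sum>x\<in>S. dist dep x)"
    by simp
  have "finite B" using B fin finite_subset by blast
  moreover have "\<And>a b. a \<in> B \<Longrightarrow> b \<in> B \<Longrightarrow> dist a b \<le> \<bar>y a - y b\<bar>"
    using arrival_times_dist_le[OF arrival_times_subset[OF w B(1)]] .
  ultimately obtain lo hi where lohi: "lo \<in> B" "hi \<in> B"
    "nn_sum B * (card B - 1) \<le> (y hi - y lo) * card B"
    using nn_sum_le_span[of B y] B(2) p(1) by blast
  have "y hi - y lo \<le> R"
    using inside[OF lohi(1)] inside[OF lohi(2)] unfolding \<kappa>_def by (simp add: abs_le_iff)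
  then have "(y hi - y lo) * p \<le> R * p"
    by (rule mult_right_mono) simp
  moreover have "nn_sum B * (real p - 1) \<le> (y hi - y lo) * p"
    using lohi(3) B(2) p(1) by (simp add: of_nat_diff)
  ultimately have "nn_sum B * (real p - 1) \<le> R * p"
    by linarith
  with that[OF B R_bounds(1) radius] show ?thesis .
qed

lemma capacity_fraction_bound:
  fixes lam eps :: real and K s p :: nat
  assumes lam: "0 < lam" and eps: "0 < eps"
    and K: "8 / eps \<le> K" and p: "8 / eps \<le> real p - 1" "p < (lam + 3 * eps / 4) * s + 1"
    and s: "s \<le> K"
  shows "(1 - lam - eps) * p \<le> (1 - p / K) * (real p - 1)"
proof -
  define g where "g = lam + 3 * eps / 4"
  have "0 < 8 / eps" using eps by simp
  then have "0 < real K" using K by linarith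
  have "p / K < (g * s + 1) / K"
    using p(2) \<open>0 < real K\<close> unfolding g_def by (simp add: divide_strict_right_mono)
  also have "\<dots> = g * (s / K) + 1 / K"
    by (simp add: add_divide_distrib)
  also have "\<dots> \<le> g + eps / 8"
  proof -
    have "s / K \<le> 1"
      using s \<open>0 < real K\<close> by simp
    then have "g * (s / K) \<le> g"
      using lam eps unfolding g_def by (intro mult_right_le_one_le) auto
    moreover have "1 / K \<le> eps / 8"
      using K eps \<open>0 < real K\<close> by (simp add: field_simps)
    ultimately show ?thesis by linarith
  qed
  finally have "eps / 8 \<le> 1 - p / K - (1 - lam - eps)"
    unfolding g_def by simp
  then have "eps / 8 * (real p - 1) \<le> (1 - p / K - (1 - lam - eps)) * (real p - 1)"
    using p(1) \<open>0 < 8 / eps\<close> by (intro mult_right_mono) linarith+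
  moreover have "1 - lam - eps \<le> eps / 8 * (real p - 1)"
    using p(1) eps lam by (simp add: divide_le_eq mult.commute)
  ultimately have "1 - lam - eps \<le> (1 - p / K - (1 - lam - eps)) * (real p - 1)"
    by linarith
  moreover have "(1 - p / K - (1 - lam - eps)) * (real p - 1)
      = (1 - p / K) * (real p - 1) - (1 - lam - eps) * (real p - 1)"
    by (simp add: algebra_simps)
  ultimately show ?thesis by (simp add: algebra_simps)
qed

text \<open>The capacity bound makes both 1 / K and 1 / (p - 1) at most eps / 8, since
  p \<ge> (lam + 3 eps / 4) s > (lam + 3 eps / 4) (lam + eps) K.\<close>

lemma central_subset_size:
  fixes lam eps :: real and K s :: nat
  assumes lam: "0 < lam" and eps: "0 < eps" "lam + eps < 1"
    and K: "8 / eps + 1 \<le> (lam + 3 * eps / 4) * (lam + eps) * K"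
    and s: "(lam + eps) * K < s" "s \<le> K"
  obtains p :: nat where "2 \<le> p" "p \<le> s" "(lam + 3 * eps / 4) * s \<le> p"
    "(1 - lam - eps) * p \<le> (1 - p / K) * (real p - 1)"
proof -
  define g where "g = lam + 3 * eps / 4"
  define p where "p = nat \<lceil>g * s\<rceil>"
  have g: "0 < g" "g < 1" using lam eps unfolding g_def by auto
  have "real p = of_int \<lceil>g * s\<rceil>"
    unfolding p_def using g by simp
  then have p_lower: "g * s \<le> p" and p_upper: "p < g * s + 1"
    by linarith+
  have "g * ((lam + eps) * K) \<le> g * s"
    using s g by simp
  then have p_minus_1: "8 / eps \<le> real p - 1"
    using K p_lower unfolding g_def by (simp add: mult.assoc)
  have "8 < 8 / eps" using eps lam by (simp add: less_divide_eq)
  then have "2 \<le> p" using p_minus_1 by linarith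
  moreover have "p \<le> s"
    using p_upper g mult_left_le_one_le[of "real s" g] by simp
  moreover have "(lam + eps) * g * K \<le> K"
    using g eps lam mult_le_one[of "lam + eps" g] by (simp add: mult_left_le_one_le)
  then have "8 / eps \<le> K"
    using K unfolding g_def by (simp add: mult.commute mult.left_commute)
  ultimately show ?thesis
    using that p_lower capacity_fraction_bound[OF lam eps(1) _ p_minus_1 _ s(2)] p_upper
    unfolding g_def by blast
qed

lemma large_piece_witness:
  fixes lam eps :: real and K :: nat
  assumes lam: "0 < lam" and eps: "0 < eps" "lam + eps < 1"
    and K: "8 / eps + 1 \<le> (lam + 3 * eps / 4) * (lam + eps) * K"
    and w: "arrival_times dep C S y" and fin: "finite S"
    and large: "(lam + eps) * K < card S" and cap: "card S \<le> K"
  obtains B where "B \<subseteq> S" "(lam + 3 * eps / 4) * card S \<le> card B" "2 \<le> card B"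
    "(1 - lam - eps) * nn_sum B \<le> C - 2 / K * (\<Sum>x\<in>S. dist dep x)"
proof -
  obtain p where p: "2 \<le> p" "p \<le> card S" "(lam + 3 * eps / 4) * card S \<le> p"
    and p_ratio: "(1 - lam - eps) * p \<le> (1 - p / K) * (real p - 1)"
    by (rule central_subset_size[OF lam eps K large cap])
  obtain B and R :: real where B: "B \<subseteq> S" "card B = p" and R: "0 \<le> R"
    and radius: "(1 - p / K) * R \<le> C - 2 / K * (\<Sum>x\<in>S. dist dep x)"
    and span: "nn_sum B * (real p - 1) \<le> R * p"
    by (rule arrival_times_central_subset[OF w fin p(1,2) cap])
  define c where "c = 1 - lam - eps"
  define q where "q = real p - 1"
  define D where "D = C - 2 / K * (\<Sum>x\<in>S. dist dep x)"
  have "0 < q" "0 \<le> c" using p(1) eps unfolding q_def c_def by auto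
  have "c * nn_sum B * q = c * (nn_sum B * q)"
    by (rule mult.assoc)
  also have "\<dots> \<le> c * (R * p)"
    using span \<open>0 \<le> c\<close> unfolding q_def by (rule mult_left_mono)
  also have "\<dots> = c * p * R"
    by (simp add: mult_ac)
  also have "\<dots> \<le> (1 - p / K) * q * R"
    using p_ratio R unfolding c_def q_def by (rule mult_right_mono)
  also have "\<dots> = (1 - p / K) * R * q"
    by (simp add: mult_ac)
  also have "\<dots> \<le> D * q"
    using radius \<open>0 < q\<close> unfolding D_def by (intro mult_right_mono) auto
  finally have "c * nn_sum B \<le> D"
    using \<open>0 < q\<close> by simp
  with B p show ?thesis using that unfolding c_def D_def by simp
qed

lemma small_pieces_witness:
  fixes S :: "'i \<Rightarrow> 'a::metric_space set" and a :: real and K :: nat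
  assumes "finite I" "disjoint_family_on S I" "a \<le> 1" "0 < K"
    and pieces: "\<And>i. i \<in> I \<Longrightarrow> finite (S i) \<and> card (S i) \<le> a * K \<and> C i \<ge> 0 \<and>
      (\<exists>y. arrival_times dep (C i) (S i) y)"
  obtains U where "U \<subseteq> (\<Union>i\<in>I. S i)" "card (\<Union>i\<in>I. S i) \<le> card U + 1"
    "\<And>x. x \<in> U \<Longrightarrow> U - {x} \<noteq> {}"
    "(1 - a) * nn_sum U \<le> (\<Sum>i\<in>I. C i - 2 / K * (\<Sum>x\<in>S i. dist dep x))"
proof -
  let ?W = "\<Union>i\<in>I. S i"
  have surplus: "(1 - a) * C i \<le> C i - 2 / K * (\<Sum>x\<in>S i. dist dep x)" if i: "i \<in> I" for i
  proof -
    obtain y where "arrival_times dep (C i) (S i) y" using pieces[OF i] by blast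
    moreover have "0 \<le> (\<Sum>x\<in>S i. \<bar>2 * y x - C i\<bar>)"
      by (simp add: sum_nonneg)
    ultimately have "2 * (\<Sum>x\<in>S i. dist dep x) \<le> card (S i) * C i"
      using arrival_times_sum_dist[of dep "C i" "S i" y] by linarith
    also have "\<dots> \<le> a * K * C i"
      using pieces[OF i] by (intro mult_right_mono) auto
    finally show ?thesis
      using \<open>0 < K\<close> by (simp add: field_simps)
  qed
  then have total: "(1 - a) * (\<Sum>i\<in>I. C i) \<le> (\<Sum>i\<in>I. C i - 2 / K * (\<Sum>x\<in>S i. dist dep x))"
    by (simp add: sum_distrib_left sum_mono)
  show ?thesis
  proof (cases "2 \<le> card ?W")
    case True
    obtain y where "arrival_times dep (\<Sum>i\<in>I. C i) ?W y"
      using arrival_times_UN[of I S dep C] assms by blast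
    then have "nn_sum ?W \<le> (\<Sum>i\<in>I. C i)"
      using True assms by (intro arrival_times_nn_sum_le) auto
    then have "(1 - a) * nn_sum ?W \<le> (\<Sum>i\<in>I. C i - 2 / K * (\<Sum>x\<in>S i. dist dep x))"
      using total \<open>a \<le> 1\<close> mult_left_mono[of "nn_sum ?W" "\<Sum>i\<in>I. C i" "1 - a"] by simp
    moreover have "?W - {x} \<noteq> {}" for x
      using True by (rule Diff_singleton_nonempty_if_two_le_card)
    ultimately show ?thesis using that[of ?W] by simp
  next
    case False
    have "0 \<le> (1 - a) * (\<Sum>i\<in>I. C i)"
      using \<open>a \<le> 1\<close> pieces by (intro mult_nonneg_nonneg sum_nonneg) auto
    with total False show ?thesis using that[of "{}"] by (simp add: nn_sum_def)
  qed
qed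

lemma large_pieces_witness:
  fixes S :: "'i \<Rightarrow> 'a::metric_space set" and lam eps :: real and K :: nat
  assumes lam: "0 < lam" and eps: "0 < eps" "lam + eps < 1"
    and K: "8 / eps + 1 \<le> (lam + 3 * eps / 4) * (lam + eps) * K"
    and fin: "finite I" and disj: "disjoint_family_on S I"
    and pieces: "\<And>i. i \<in> I \<Longrightarrow> finite (S i) \<and> (lam + eps) * K < card (S i) \<and> card (S i) \<le> K \<and>
      (\<exists>y. arrival_times dep (C i) (S i) y)"
  obtains U where "U \<subseteq> (\<Union>i\<in>I. S i)" "(lam + 3 * eps / 4) * card (\<Union>i\<in>I. S i) \<le> card U"
    "\<And>x. x \<in> U \<Longrightarrow> U - {x} \<noteq> {}"
    "(1 - lam - eps) * nn_sum U \<le> (\<Sum>i\<in>I. C i - 2 / K * (\<Sum>x\<in>S i. dist dep x))"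
proof -
  define g where "g = lam + 3 * eps / 4"
  define surplus where "surplus i = C i - 2 / K * (\<Sum>x\<in>S i. dist dep x)" for i
  have "\<exists>B. B \<subseteq> S i \<and> g * card (S i) \<le> card B \<and> 2 \<le> card B \<and>
      (1 - lam - eps) * nn_sum B \<le> surplus i" if i: "i \<in> I" for i
  proof -
    obtain y where y: "arrival_times dep (C i) (S i) y" and fin_i: "finite (S i)"
      and large: "(lam + eps) * K < card (S i)" and cap: "card (S i) \<le> K"
      using pieces[OF i] by blast
    obtain B where "B \<subseteq> S i" "g * card (S i) \<le> card B" "2 \<le> card B"
      "(1 - lam - eps) * nn_sum B \<le> surplus i"
      unfolding g_def surplus_def by (rule large_piece_witness[OF lam eps K y fin_i large cap])
    then show ?thesis by blast
  qed
  then obtain B where B: "\<And>i. i \<in> I \<Longrightarrow> B i \<subseteq> S i \<and> g * card (S i) \<le> card (B i) \<and>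
      2 \<le> card (B i) \<and> (1 - lam - eps) * nn_sum (B i) \<le> surplus i"
    by metis
  let ?U = "\<Union>i\<in>I. B i"
  have finB: "finite (B i)" if "i \<in> I" for i
    using B[OF that] pieces[OF that] finite_subset by blast
  have disjB: "disjoint_family_on B I"
    using disj by (rule disjoint_family_on_bisimulation) (use B in blast)
  have companion: "B i - {x} \<noteq> {}" if "i \<in> I" for i x
    using B[OF that] by (intro Diff_singleton_nonempty_if_two_le_card) simp
  have "(1 - lam - eps) * nn_sum ?U \<le> (1 - lam - eps) * (\<Sum>i\<in>I. nn_sum (B i))"
    using nn_sum_UN_le[OF fin disjB finB companion] eps by (intro mult_left_mono) auto
  also have "\<dots> \<le> (\<Sum>i\<in>I. surplus i)"
    unfolding sum_distrib_left using B by (intro sum_mono) blast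
  finally have cost: "(1 - lam - eps) * nn_sum ?U \<le> (\<Sum>i\<in>I. surplus i)" .
  have "card (\<Union>i\<in>I. S i) = (\<Sum>i\<in>I. card (S i))"
    by (rule card_UN_disjoint) (use fin pieces disj in \<open>auto simp: disjoint_family_on_def\<close>)
  then have "g * card (\<Union>i\<in>I. S i) = (\<Sum>i\<in>I. g * card (S i))"
    by (simp add: sum_distrib_left)
  also have "\<dots> \<le> (\<Sum>i\<in>I. real (card (B i)))"
    using B by (intro sum_mono) blast
  also have "\<dots> = card ?U"
    by (subst card_UN_disjoint) (use fin finB disjB in \<open>auto simp: disjoint_family_on_def\<close>)
  finally have size: "g * card (\<Union>i\<in>I. S i) \<le> card ?U" .
  have "?U - {x} \<noteq> {}" if "x \<in> ?U" for x
    using companion that by blast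
  moreover have "?U \<subseteq> (\<Union>i\<in>I. S i)" using B by blast
  ultimately show ?thesis
    using that cost size unfolding g_def surplus_def by blast
qed

lemma rad_UN:
  assumes "finite I" "\<And>i. i \<in> I \<Longrightarrow> finite (S i)" "disjoint_family_on S I"
  shows "rad dep (\<Union>i\<in>I. S i) K = (\<Sum>i\<in>I. 2 / K * (\<Sum>x\<in>S i. dist dep x))"
  unfolding rad_def using assms by (simp add: sum.UNION_disjoint_family sum_distrib_left)

lemma witnesses_Un:
  fixes A1 A2 U1 U2 :: "'a::metric_space set" and g :: real
  assumes fin: "finite A1" "finite A2" and apart: "A1 \<inter> A2 = {}" and sub: "U1 \<subseteq> A1" "U2 \<subseteq> A2"
    and "\<And>x. x \<in> U1 \<Longrightarrow> U1 - {x} \<noteq> {}" "\<And>x. x \<in> U2 \<Longrightarrow> U2 - {x} \<noteq> {}"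
    and size: "card A1 \<le> card U1 + 1" "g * card A2 \<le> card U2" and g: "0 \<le> g" "g \<le> 1"
  shows "nn_sum (U1 \<union> U2) \<le> nn_sum U1 + nn_sum U2"
    and "g * card (A1 \<union> A2) - 1 \<le> card (U1 \<union> U2)"
proof -
  have finU: "finite U1" "finite U2"
    using finite_subset[OF sub(1) fin(1)] finite_subset[OF sub(2) fin(2)] .
  have "U1 \<inter> U2 = {}" using apart sub by blast
  show "nn_sum (U1 \<union> U2) \<le> nn_sum U1 + nn_sum U2"
    by (rule nn_sum_Un_le) fact+
  have "g * card A1 \<le> card A1"
    using g by (intro mult_left_le_one_le) auto
  then show "g * card (A1 \<union> A2) - 1 \<le> card (U1 \<union> U2)"
    using size card_Un_disjoint[OF fin apart] card_Un_disjoint[OF finU \<open>U1 \<inter> U2 = {}\<close>]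
    by (simp add: distrib_left)
qed

lemma pieces_witness:
  fixes S :: "'i \<Rightarrow> 'a::metric_space set" and lam eps :: real and K :: nat
  assumes lam: "0 < lam" and eps: "0 < eps" "lam + eps < 1"
    and K: "8 / eps + 1 \<le> (lam + 3 * eps / 4) * (lam + eps) * K"
    and fin: "finite I" and disj: "disjoint_family_on S I"
    and pieces: "\<And>i. i \<in> I \<Longrightarrow> finite (S i) \<and> card (S i) \<le> K \<and> C i \<ge> 0 \<and>
      (\<exists>y. arrival_times dep (C i) (S i) y)"
  obtains U where "U \<subseteq> (\<Union>i\<in>I. S i)" "(lam + 3 * eps / 4) * card (\<Union>i\<in>I. S i) - 1 \<le> card U"
    "rad dep (\<Union>i\<in>I. S i) K + (1 - lam - eps) * nn_sum U \<le> (\<Sum>i\<in>I. C i)"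
proof -
  define surplus where "surplus i = C i - 2 / K * (\<Sum>x\<in>S i. dist dep x)" for i
  define small where "small = {i \<in> I. card (S i) \<le> (lam + eps) * K}"
  define large where "large = I - small"
  have "0 < 8 / eps" using eps by simp
  with K have "0 < K" by (cases "K = 0") auto
  have parts: "small \<subseteq> I" "large \<subseteq> I" "small \<inter> large = {}" "I = small \<union> large"
    unfolding large_def small_def by auto
  have fins: "finite (S i)" if "i \<in> I" for i using pieces[OF that] by blast
  have fin_UN: "finite (\<Union>i\<in>J. S i)" if "J \<subseteq> I" for J
    by (rule finite_UN_I[OF finite_subset[OF that fin]]) (use fins that in blast)
  obtain U1 where U1: "U1 \<subseteq> (\<Union>i\<in>small. S i)" "card (\<Union>i\<in>small. S i) \<le> card U1 + 1"
    "\<And>x. x \<in> U1 \<Longrightarrow> U1 - {x} \<noteq> {}" "(1 - (lam + eps)) * nn_sum U1 \<le> (\<Sum>i\<in>small. surplus i)"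
  proof (rule small_pieces_witness[of small S "lam + eps" K C dep])
    show "finite small" using finite_subset[OF parts(1) fin] .
    show "disjoint_family_on S small" using disjoint_family_on_mono[OF parts(1) disj] .
    fix i assume "i \<in> small"
    then show "finite (S i) \<and> card (S i) \<le> (lam + eps) * K \<and> C i \<ge> 0 \<and>
        (\<exists>y. arrival_times dep (C i) (S i) y)"
      using pieces unfolding small_def by blast
  qed (use eps \<open>0 < K\<close> in \<open>auto simp: surplus_def\<close>)
  obtain U2 where U2: "U2 \<subseteq> (\<Union>i\<in>large. S i)" "(lam + 3 * eps / 4) * card (\<Union>i\<in>large. S i) \<le> card U2"
    "\<And>x. x \<in> U2 \<Longrightarrow> U2 - {x} \<noteq> {}" "(1 - lam - eps) * nn_sum U2 \<le> (\<Sum>i\<in>large. surplus i)"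
  proof (rule large_pieces_witness[OF lam eps K, where I = large and S = S and C = C and dep = dep])
    show "finite large" using finite_subset[OF parts(2) fin] .
    show "disjoint_family_on S large" using disjoint_family_on_mono[OF parts(2) disj] .
    fix i assume "i \<in> large"
    then show "finite (S i) \<and> (lam + eps) * K < card (S i) \<and> card (S i) \<le> K \<and>
        (\<exists>y. arrival_times dep (C i) (S i) y)"
      using pieces unfolding large_def small_def by auto
  qed (auto simp: surplus_def)
  have apart: "(\<Union>i\<in>small. S i) \<inter> (\<Union>i\<in>large. S i) = {}"
  proof -
    have "S i \<inter> S j = {}" if "i \<in> small" "j \<in> large" for i j
    proof -
      have "i \<noteq> j" "i \<in> I" "j \<in> I" using that parts by auto
      then show ?thesis using disj unfolding disjoint_family_on_def by blast
    qed
    then show ?thesis by blast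
  qed
  have "0 \<le> lam + 3 * eps / 4" "lam + 3 * eps / 4 \<le> 1" using lam eps by auto
  note union = witnesses_Un[OF fin_UN[OF parts(1)] fin_UN[OF parts(2)] apart U1(1) U2(1) U1(3) U2(3)
      U1(2) U2(2) this]
  have "(1 - lam - eps) * nn_sum (U1 \<union> U2) \<le> (1 - lam - eps) * (nn_sum U1 + nn_sum U2)"
    using union(1) eps by (intro mult_left_mono) auto
  also have "\<dots> \<le> (\<Sum>i\<in>small. surplus i) + (\<Sum>i\<in>large. surplus i)"
    using U1(4) U2(4) by (simp add: distrib_left diff_diff_eq)
  also have "\<dots> = (\<Sum>i\<in>I. surplus i)"
    using sum.union_disjoint[OF finite_subset[OF parts(1) fin] finite_subset[OF parts(2) fin] parts(3),
        of surplus] parts(4) by simp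
  also have "\<dots> = (\<Sum>i\<in>I. C i) - rad dep (\<Union>i\<in>I. S i) K"
    unfolding surplus_def using rad_UN[OF fin fins disj, of dep K] by (simp add: sum_subtractf)
  finally have cost: "rad dep (\<Union>i\<in>I. S i) K + (1 - lam - eps) * nn_sum (U1 \<union> U2) \<le> (\<Sum>i\<in>I. C i)"
    by simp
  have whole: "(\<Union>i\<in>small. S i) \<union> (\<Union>i\<in>large. S i) = (\<Union>i\<in>I. S i)"
    using parts(4) by blast
  have "U1 \<union> U2 \<subseteq> (\<Union>i\<in>I. S i)"
    using U1(1) U2(1) whole by blast
  moreover have "(lam + 3 * eps / 4) * card (\<Union>i\<in>I. S i) - 1 \<le> card (U1 \<union> U2)"
    using union(2) whole by simp
  ultimately show ?thesis
    using cost by (rule that)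
qed

section \<open>The lower bound on OPT\<close>

lemma feasible_solution_witness:
  fixes lam eps :: real and K :: nat and dep :: "'a::metric_space"
  assumes lam: "0 < lam" and eps: "0 < eps" "lam + eps < 1"
    and K: "8 / eps + 1 \<le> (lam + 3 * eps / 4) * (lam + eps) * K"
    and V: "4 < eps * card V" and feas: "feasible_solution V K T"
  obtains U where "U \<subseteq> V" "(lam + eps / 2) * card V < card U"
    "rad dep V K + (1 - lam - eps) * nn_sum U \<le> (\<Sum>t\<leftarrow>T. tour_cost dep t)"
proof -
  obtain S C where disj: "disjoint_family_on S {..<length T}" and V_eq: "V = (\<Union>i<length T. S i)"
    and pieces: "\<And>i. i < length T \<Longrightarrow> finite (S i) \<and> card (S i) \<le> K \<and> C i \<ge> 0 \<and>
      (\<exists>y. arrival_times dep (C i) (S i) y)"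
    and cost: "(\<Sum>t\<leftarrow>T. tour_cost dep t) = (\<Sum>i<length T. C i)"
    using feasible_solution_pieces[OF feas, of dep] by blast
  obtain U where "U \<subseteq> V" "(lam + 3 * eps / 4) * card V - 1 \<le> card U"
    "rad dep V K + (1 - lam - eps) * nn_sum U \<le> (\<Sum>t\<leftarrow>T. tour_cost dep t)"
    unfolding V_eq cost using pieces_witness[OF lam eps K finite_lessThan disj] pieces by blast
  moreover have "(lam + eps / 2) * card V < (lam + 3 * eps / 4) * card V - 1"
    using V by (simp add: algebra_simps)
  ultimately show ?thesis
    using that by fastforce
qed

lemma OPT_ge_uniform_witness:
  fixes dep :: "'a::metric_space" and f :: "'a set \<Rightarrow> real"
  assumes "finite \<A>" "finite V" "0 < K" "0 \<le> c"
    and every: "\<And>T. feasible_solution V K T \<Longrightarrow> \<exists>U\<in>\<A>. rad dep V K + c * f U \<le> (\<Sum>t\<leftarrow>T. tour_cost dep t)"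
  shows "\<exists>U\<in>\<A>. rad dep V K + c * f U \<le> OPT dep V K"
proof -
  define costs where "costs = {(\<Sum>t\<leftarrow>T. tour_cost dep t) | T. feasible_solution V K T}"
  obtain xs where "set xs = V" using finite_list[OF \<open>finite V\<close>] by blast
  then have singletons: "feasible_solution V K (map (\<lambda>x. [x]) xs)"
    unfolding feasible_solution_def using \<open>0 < K\<close> by auto
  then have "\<A> \<noteq> {}" using every by blast
  define U0 where "U0 = arg_min_on f \<A>"
  have U0: "U0 \<in> \<A>" "\<And>U. U \<in> \<A> \<Longrightarrow> f U0 \<le> f U"
    unfolding U0_def using arg_min_if_finite[OF \<open>finite \<A>\<close> \<open>\<A> \<noteq> {}\<close>, of f]
    by (auto simp: is_arg_min_def not_less)
  have "rad dep V K + c * f U0 \<le> Inf costs"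
  proof (rule cInf_greatest)
    show "costs \<noteq> {}" unfolding costs_def using singletons by blast
    fix z assume "z \<in> costs"
    then obtain T where "feasible_solution V K T" "z = (\<Sum>t\<leftarrow>T. tour_cost dep t)"
      unfolding costs_def by blast
    with every obtain U where "U \<in> \<A>" "rad dep V K + c * f U \<le> z" by blast
    moreover have "c * f U0 \<le> c * f U" using U0(2)[OF \<open>U \<in> \<A>\<close>] \<open>0 \<le> c\<close> by (rule mult_left_mono)
    ultimately show "rad dep V K + c * f U0 \<le> z" by linarith
  qed
  then show ?thesis
    using U0(1) unfolding OPT_def costs_def by blast
qed

lemma OPT_witness:
  fixes lam eps :: real and K :: nat and dep :: "'a::metric_space"
  assumes lam: "0 < lam" and eps: "0 < eps" "lam + eps < 1"
    and K: "8 / eps + 1 \<le> (lam + 3 * eps / 4) * (lam + eps) * K"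
    and "finite V" "4 < eps * card V"
  shows "\<exists>U\<subseteq>V. (lam + eps / 2) * card V < card U \<and>
    rad dep V K + (1 - lam - eps) * nn_sum U \<le> OPT dep V K"
proof -
  have "0 < 8 / eps" using eps by simp
  with K have "0 < K" by (cases "K = 0") auto
  have "\<exists>U\<in>{U. U \<subseteq> V \<and> (lam + eps / 2) * card V < card U}.
      rad dep V K + (1 - lam - eps) * nn_sum U \<le> OPT dep V K"
  proof (rule OPT_ge_uniform_witness)
    show "finite {U. U \<subseteq> V \<and> (lam + eps / 2) * card V < card U}"
      using \<open>finite V\<close> by simp
    fix T assume "feasible_solution V K T"
    from feasible_solution_witness[OF lam eps K \<open>4 < eps * card V\<close> this, of dep]
    show "\<exists>U\<in>{U. U \<subseteq> V \<and> (lam + eps / 2) * card V < card U}.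
        rad dep V K + (1 - lam - eps) * nn_sum U \<le> (\<Sum>t\<leftarrow>T. tour_cost dep t)"
      by blast
  qed (use \<open>finite V\<close> \<open>0 < K\<close> eps in auto)
  then show ?thesis by blast
qed

lemma eventually_ge_scaled:
  fixes k :: "nat \<Rightarrow> nat" and a b :: real
  assumes "filterlim k at_top at_top" "0 < a"
  shows "eventually (\<lambda>n. b \<le> a * k n) sequentially"
proof -
  have "filterlim (\<lambda>n. real (k n)) at_top sequentially"
    using filterlim_compose[OF filterlim_real_sequentially assms(1)] .
  then have "eventually (\<lambda>n. b / a \<le> real (k n)) sequentially"
    unfolding filterlim_at_top by blast
  then show ?thesis
    by eventually_elim (use \<open>0 < a\<close> in \<open>simp add: divide_le_eq mult.commute\<close>)
qed

theorem theorem10: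
  fixes lam eps :: real and k :: "nat \<Rightarrow> nat"
  assumes "lam > 0" and "eps > 0" and "lam + eps < 1"
    and "filterlim k at_top at_top"
  shows "\<exists>N. \<forall>n\<ge>N. \<forall>(dep::'a::metric_space) V. finite V \<and> card V = n \<longrightarrow>
           (\<exists>U\<subseteq>V. real (card U) > (lam + eps / 2) * real n \<and>
              OPT dep V (k n) \<ge> rad dep V (k n) + (1 - lam - eps) * (\<Sum>x\<in>U. infdist x (U - {x})))"
proof -
  have "eventually (\<lambda>n. 8 / eps + 1 \<le> (lam + 3 * eps / 4) * (lam + eps) * k n) sequentially"
    using assms by (intro eventually_ge_scaled) auto
  moreover have "eventually (\<lambda>n. 5 \<le> eps * n) sequentially"
    using assms(2) by (intro eventually_ge_scaled filterlim_ident)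
  ultimately have "eventually (\<lambda>n. 8 / eps + 1 \<le> (lam + 3 * eps / 4) * (lam + eps) * k n \<and>
      5 \<le> eps * n) sequentially"
    by (rule eventually_conj)
  then obtain N where N: "\<And>n. N \<le> n \<Longrightarrow>
      8 / eps + 1 \<le> (lam + 3 * eps / 4) * (lam + eps) * k n \<and> 5 \<le> eps * n"
    unfolding eventually_sequentially by blast
  have "\<exists>U\<subseteq>V. (lam + eps / 2) * n < card U \<and>
      rad dep V (k n) + (1 - lam - eps) * nn_sum U \<le> OPT dep V (k n)"
    if "N \<le> n" "finite V" "card V = n" for n and dep :: 'a and V
    using OPT_witness[OF assms(1-3), of "k n" V dep] N[OF that(1)] that(2,3) by simp
  then show ?thesis
    unfolding nn_sum_def by blast
qed

end
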